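(* Assume the stochastic matrix $A$ is irreducible, aperiodic, and symmetric, and let $1>\gamma_2\geq\cdots\geq\gamma_N>-1$ be the eigenvalues of $A$ other than the (simple) eigenvalue $1$, listed with multiplicity. Then for every $t\geq 1$, $$\tau_t(A)=\frac{1}{1+\frac{1}{t}\sum_{\ell=2}^N\frac{1-\gamma_\ell^{2t}}{1-\gamma_\ell^2}}.$$ Moreover, setting $\mathscr S(A)=\sum_{\ell=2}^N\frac{1}{1-\gamma_\ell^2}$ and $\Gamma(A)=\max_{2\leq\ell\leq N}|\gamma_\ell|$, for all $t\geq 1$, $$1-\frac{\mathscr S(A)}{t}\leq\tau_t(A)\leq 1-\frac{\mathscr S(A)}{t}+\Gamma(A)^{2t}\frac{\mathscr S(A)}{t}+\Big(\frac{\mathscr S(A)}{t}\Big)^2 .$$ In particular $t(1-\tau_t(A))\to\mathscr S(A)$ as $t\to\infty$.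
   Context: Let $X$ be a square-integrable real random variable with $\mathbb E X=\theta$ and $\mathrm{Var}(X)=\sigma^2>0$. Fix an integer $N\geq 2$. For $i\in\{1,\dots,N\}$ and $t\geq 1$ let $X_t^{(i)}$ be random variables distributed as $X$, mutually independent over both $i$ and $t$, and write $\mathbf X_t=(X_t^{(1)},\dots,X_t^{(N)})^\top$. Let $A=(a_{ij})_{1\le i,j\le N}$ be a stochastic matrix ($a_{ij}\geq 0$ and every row sums to $1$). Define $\hat{\boldsymbol\theta}_1=\mathbf X_1$ and $\hat{\boldsymbol\theta}_{t+1}=\frac{t}{t+1}A\hat{\boldsymbol\theta}_t+\frac{1}{t+1}\mathbf X_{t+1}$ for $t\geq 1$. Let $\bar{\mathbb X}_{Nt}=\frac{1}{Nt}\sum_{i=1}^N\sum_{k=1}^t X_k^{(i)}$, $\mathbf 1=(1,\dots,1)^\top$, and let $\|\cdot\|$ denote the Euclidean norm. The performance ratio is $\tau_t(A)=\dfrac{\mathbb E\|(\bar{\mathbb X}_{Nt}-\theta)\mathbf 1\|^2}{\mathbb E\|\hat{\boldsymbol\theta}_t-\theta\mathbf 1\|^2}$, $t\geq 1$. $A$ is irreducible if for every $(i,j)$ there is $k\geq 0$ with $(A^k)_{ij}\neq 0$; aperiodic means the gcd of all $k\geq1$ with $(A^k)_{ii}>0$ equals $1$. *)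

theory Defs
  imports "HOL-Analysis.Analysis" "HOL-Probability.Probability"
begin

text \<open>Matrices are indexed by a finite type 'n with N = CARD('n) nodes.\<close>

definition matpow :: "real^'n^'n \<Rightarrow> nat \<Rightarrow> real^'n^'n" where
  "matpow A k = ((\<lambda>B. A ** B) ^^ k) (mat 1)"

definition stochastic_matrix :: "real^'n^'n \<Rightarrow> bool" where
  "stochastic_matrix A \<longleftrightarrow> (\<forall>i j. A $ i $ j \<ge> 0) \<and> (\<forall>i. (\<Sum>j\<in>UNIV. A $ i $ j) = 1)"

definition irreducible_matrix :: "real^'n^'n \<Rightarrow> bool" where
  "irreducible_matrix A \<longleftrightarrow> (\<forall>i j. \<exists>k. matpow A k $ i $ j \<noteq> 0)"

definition aperiodic_matrix :: "real^'n^'n \<Rightarrow> bool" where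
  "aperiodic_matrix A \<longleftrightarrow> (\<forall>i. Gcd {k::nat. k \<ge> 1 \<and> matpow A k $ i $ i > 0} = 1)"

definition ones :: "real^'n" where
  "ones = (\<chi> i. 1)"

text \<open>Observation vector at time t: X t i is the observation of agent i at time t (t \<ge> 1).\<close>
definition Xvec :: "(nat \<Rightarrow> 'n \<Rightarrow> 'a \<Rightarrow> real) \<Rightarrow> nat \<Rightarrow> 'a \<Rightarrow> real^'n" where
  "Xvec X t \<omega> = (\<chi> i. X t i \<omega>)"

text \<open>Estimates: theta_hat 1 = X_1, theta_hat (t+1) = t/(t+1) A theta_hat t + 1/(t+1) X_(t+1).
  The value at t = 0 is an irrelevant placeholder.\<close>
fun theta_hat :: "real^'n^'n \<Rightarrow> (nat \<Rightarrow> 'n \<Rightarrow> 'a \<Rightarrow> real) \<Rightarrow> nat \<Rightarrow> 'a \<Rightarrow> real^'n" where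
  "theta_hat A X 0 \<omega> = 0"
| "theta_hat A X (Suc 0) \<omega> = Xvec X 1 \<omega>"
| "theta_hat A X (Suc (Suc t)) \<omega> =
     (real (Suc t) / real (Suc (Suc t))) *\<^sub>R (A *v theta_hat A X (Suc t) \<omega>)
     + (1 / real (Suc (Suc t))) *\<^sub>R Xvec X (Suc (Suc t)) \<omega>"

definition grand_mean :: "(nat \<Rightarrow> 'n::finite \<Rightarrow> 'a \<Rightarrow> real) \<Rightarrow> nat \<Rightarrow> 'a \<Rightarrow> real" where
  "grand_mean X t \<omega> = (\<Sum>i\<in>UNIV. \<Sum>k\<in>{1..t}. X k i \<omega>) / (real CARD('n) * real t)"

definition perf_ratio :: "'a measure \<Rightarrow> real^'n^'n \<Rightarrow> (nat \<Rightarrow> 'n \<Rightarrow> 'a \<Rightarrow> real) \<Rightarrow> real \<Rightarrow> nat \<Rightarrow> real" where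
  "perf_ratio M A X \<theta> t =
     (\<integral>\<omega>. (norm ((grand_mean X t \<omega> - \<theta>) *\<^sub>R (ones::real^'n)))\<^sup>2 \<partial>M) /
     (\<integral>\<omega>. (norm (theta_hat A X t \<omega> - \<theta> *\<^sub>R ones))\<^sup>2 \<partial>M)"

end

theory Submission
  imports Defs "Jordan_Normal_Form.Schur_Decomposition"
begin

text \<open>Because \<open>A\<close> fixes the all-ones vector \<open>\<one>\<close>, the recursion unrolls to
  \<open>t (theta_hat t - \<theta>\<one>) = \<Sum>\<^sub>k\<^sub>\<le>\<^sub>t A\<^bsup>t-k\<^esup> (X\<^sub>k - \<theta>\<one>)\<close>. The centred observations are orthogonal in
  \<open>L\<^sup>2\<close> with common variance \<open>\<sigma>\<^sup>2\<close>, so the mean square error is \<open>\<sigma>\<^sup>2 t\<^sup>-\<^sup>2 \<Sum>\<^sub>s\<^sub><\<^sub>t \<parallel>A\<^sup>s\<parallel>\<^sub>F\<^sup>2\<close>,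
  while that of the centralised mean is \<open>\<sigma>\<^sup>2/t\<close>. For symmetric \<open>A\<close> the squared Frobenius
  norm \<open>\<parallel>A\<^sup>s\<parallel>\<^sub>F\<^sup>2\<close> is the trace of \<open>A\<^bsup>2s\<^esup>\<close>, i.e. \<open>1 + \<Sum>\<^sub>\<ell> \<gamma>\<^sub>\<ell>\<^bsup>2s\<^esup>\<close> (read off a Schur
  triangularisation), so \<open>\<tau>\<^sub>t\<close> is \<open>t\<close> divided by \<open>t\<close> plus a sum of geometric series. The bounds
  and the limit then follow from \<open>1 - D \<le> 1/(1+D) \<le> 1 - D + D\<^sup>2\<close>.\<close>

hide_const (open) Matrix.mat Determinant.det
no_notation Matrix.vec_index (infixl \<open>$\<close> 100)

lemma matpow_0 [simp]: "matpow A 0 = mat 1"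
  by (simp add: matpow_def)

lemma matpow_Suc: "matpow A (Suc m) = A ** matpow A m"
  by (simp add: matpow_def)

lemma matpow_add: "matpow A (a + b) = matpow A a ** matpow A b"
  by (induction a) (simp_all add: matpow_Suc matrix_mul_assoc)

lemma matpow_Suc_right: "matpow A (Suc m) = matpow A m ** A"
  using matpow_add[of A m 1] by (simp add: matpow_Suc)

lemma transpose_matpow: "transpose A = A \<Longrightarrow> transpose (matpow A m) = matpow A m"
proof (induction m)
  case (Suc m)
  have "transpose (matpow A (Suc m)) = transpose (matpow A m) ** transpose A"
    by (simp add: matpow_Suc matrix_transpose_mul)
  also have "\<dots> = matpow A (Suc m)"
    using Suc by (simp add: matpow_Suc_right)
  finally show ?case .
qed simp

lemma sum_square_matpow_eq_trace:
  assumes "transpose A = A"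
  shows "(\<Sum>i\<in>UNIV. \<Sum>j\<in>UNIV. (matpow A m $ i $ j)\<^sup>2) = trace (matpow A (2 * m))"
proof -
  have "matpow A (2 * m) = matpow A m ** transpose (matpow A m)"
    using matpow_add[of A m m] transpose_matpow[OF assms] by (simp add: mult_2)
  thus ?thesis
    by (simp add: trace_def matrix_matrix_mult_def transpose_def power2_eq_square)
qed

section \<open>Traces of powers and the characteristic polynomial\<close>

text \<open>The Schur decomposition is only available for the list-based matrices of
  \<open>Jordan_Normal_Form\<close>; \<open>e\<close> enumerates the index type.\<close>

definition to_jnf :: "(nat \<Rightarrow> 'n) \<Rightarrow> 'a^'n^'n \<Rightarrow> 'a Matrix.mat" where
  "to_jnf e B = Matrix.mat CARD('n::finite) CARD('n) (\<lambda>(i,j). B $ e i $ e j)"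

lemma to_jnf_carrier [simp]: "to_jnf e (B::'a^'n^'n) \<in> carrier_mat CARD('n::finite) CARD('n)"
  and to_jnf_dims [simp]: "dim_row (to_jnf e (B::'a^'n^'n)) = CARD('n)" "dim_col (to_jnf e B) = CARD('n)"
  by (simp_all add: to_jnf_def)

lemma to_jnf_index [simp]:
  "i < CARD('n) \<Longrightarrow> j < CARD('n) \<Longrightarrow> to_jnf e (B::'a^'n^'n::finite) $$ (i,j) = B $ e i $ e j"
  by (simp add: to_jnf_def)

lemma sum_enum_reindex:
  assumes "bij_betw e {0..<CARD('n)} (UNIV::'n::finite set)"
  shows "(\<Sum>i<CARD('n). f (e i)) = (\<Sum>a\<in>UNIV. f a)"
  using sum.reindex_bij_betw[OF assms, of f] by (simp add: lessThan_atLeast0)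

lemma to_jnf_mult:
  assumes e: "bij_betw e {0..<CARD('n)} (UNIV::'n::finite set)"
  shows "to_jnf e ((A::'a::comm_semiring_1^'n^'n) ** B) = to_jnf e A * to_jnf e B"
proof (rule eq_matI)
  fix i j assume "i < dim_row (to_jnf e A * to_jnf e B)" "j < dim_col (to_jnf e A * to_jnf e B)"
  hence ij: "i < CARD('n)" "j < CARD('n)" by auto
  have "(to_jnf e A * to_jnf e B) $$ (i,j) = (\<Sum>k<CARD('n). A $ e i $ e k * B $ e k $ e j)"
    using ij by (simp add: scalar_prod_def lessThan_atLeast0)
  also have "\<dots> = (\<Sum>k\<in>UNIV. A $ e i $ k * B $ k $ e j)"
    by (rule sum_enum_reindex[OF e])
  finally show "to_jnf e (A ** B) $$ (i, j) = (to_jnf e A * to_jnf e B) $$ (i, j)"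
    using ij by (simp add: matrix_matrix_mult_def)
qed auto

lemma to_jnf_one:
  assumes "bij_betw e {0..<CARD('n)} (UNIV::'n::finite set)"
  shows "to_jnf e (mat 1 :: 'a::semiring_1^'n^'n) = 1\<^sub>m CARD('n)"
proof (rule eq_matI)
  fix i j assume "i < dim_row (1\<^sub>m CARD('n)::'a Matrix.mat)" "j < dim_col (1\<^sub>m CARD('n)::'a Matrix.mat)"
  hence ij: "i < CARD('n)" "j < CARD('n)" by auto
  have "e i = e j \<longleftrightarrow> i = j" using ij assms unfolding bij_betw_def inj_on_def by auto
  thus "to_jnf e (mat 1 :: 'a^'n^'n) $$ (i, j) = (1\<^sub>m CARD('n)::'a Matrix.mat) $$ (i, j)"
    using ij by (simp add: Finite_Cartesian_Product.mat_def)
qed auto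

lemma to_jnf_matpow:
  assumes "bij_betw e {0..<CARD('n)} (UNIV::'n::finite set)"
  shows "to_jnf e (matpow (A::real^'n^'n) m) = to_jnf e A ^\<^sub>m m"
  by (induction m) (simp_all add: to_jnf_one[OF assms] matpow_Suc_right to_jnf_mult[OF assms])

lemma prod_map_permutation_to_jnf:
  assumes e: "bij_betw e {0..<CARD('n)} (UNIV::'n::finite set)" and q: "q permutes {0..<CARD('n)}"
  shows "(\<Prod>a\<in>UNIV. B $ a $ map_permutation {0..<CARD('n)} e q a)
    = (\<Prod>i = 0..<CARD('n). to_jnf e (B::'a::comm_ring_1^'n^'n) $$ (i, q i))"
proof -
  have inj: "inj_on e {0..<CARD('n)}" using e by (simp add: bij_betw_def)
  have "(\<Prod>a\<in>UNIV. B $ a $ map_permutation {0..<CARD('n)} e q a)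
      = (\<Prod>i\<in>{0..<CARD('n)}. B $ e i $ map_permutation {0..<CARD('n)} e q (e i))"
    using prod.reindex_bij_betw[OF e, of "\<lambda>a. B $ a $ map_permutation {0..<CARD('n)} e q a"] by simp
  also have "\<dots> = (\<Prod>i = 0..<CARD('n). to_jnf e B $$ (i, q i))"
  proof (rule prod.cong[OF refl])
    fix i assume i: "i \<in> {0..<CARD('n)}"
    have "q i \<in> {0..<CARD('n)}" using q i permutes_in_image by fastforce
    thus "B $ e i $ map_permutation {0..<CARD('n)} e q (e i) = to_jnf e B $$ (i, q i)"
      using i by (simp add: map_permutation_apply[OF inj i])
  qed
  finally show ?thesis .
qed

lemma det_to_jnf:
  assumes e: "bij_betw e {0..<CARD('n)} (UNIV::'n::finite set)"
  shows "Determinant.det (to_jnf e (B::'a::comm_ring_1^'n^'n)) = det B"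
proof -
  let ?n = "CARD('n)"
  let ?S = "{q. q permutes {0..<?n}}" and ?T = "{p. p permutes (UNIV::'n set)}"
  let ?j = "map_permutation {0..<?n} e" and ?i = "map_permutation UNIV (inv_into {0..<?n} e)"
  have inj: "inj_on e {0..<?n}" using e by (simp add: bij_betw_def)
  have ie: "bij_betw (inv_into {0..<?n} e) UNIV {0..<?n}" using e by (rule bij_betw_inv_into)
  have "Determinant.det (to_jnf e B) = (\<Sum>q\<in>?S. of_int (sign q) * (\<Prod>i = 0..<?n. to_jnf e B $$ (i, q i)))"
    by (rule det_def'[OF to_jnf_carrier])
  also have "\<dots> = (\<Sum>p\<in>?T. of_int (sign p) * (\<Prod>a\<in>UNIV. B $ a $ p a))"
  proof (rule sum.reindex_bij_witness[of _ ?i ?j])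
    fix q assume q: "q \<in> ?S"
    show "?i (?j q) = q"
      by (rule map_permutation_compose_inv[OF e]) (use q inj in auto)
    show "?j q \<in> ?T" using map_permutation_permutes[OF e] q by auto
    have "sign (?j q) = sign q" by (rule sign_map_permutation) (use q inj in auto)
    moreover have "(\<Prod>a\<in>UNIV. B $ a $ ?j q a) = (\<Prod>i = 0..<?n. to_jnf e B $$ (i, q i))"
      using q by (intro prod_map_permutation_to_jnf[OF e]) simp
    ultimately show "of_int (sign (?j q)) * (\<Prod>a\<in>UNIV. B $ a $ ?j q a) =
        of_int (sign q) * (\<Prod>i = 0..<?n. to_jnf e B $$ (i, q i))"
      by simp
  next
    fix p assume p: "p \<in> ?T"
    show "?j (?i p) = p"
      by (rule map_permutation_compose_inv[OF ie]) (use p e in \<open>auto simp: f_inv_into_f bij_betw_def\<close>)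
    show "?i p \<in> ?S" using map_permutation_permutes[OF ie] p by auto
  qed
  also have "\<dots> = det B" by (simp add: Determinants.det_def)
  finally show ?thesis .
qed

definition mat_trace :: "'a::comm_semiring_1 Matrix.mat \<Rightarrow> 'a" where
  "mat_trace M = (\<Sum>i<dim_row M. M $$ (i,i))"

lemma mat_trace_mult_comm:
  assumes "A \<in> carrier_mat n k" "B \<in> carrier_mat k n"
  shows "mat_trace (A * B) = mat_trace (B * A)"
proof -
  have "mat_trace (A * B) = (\<Sum>i<n. \<Sum>j<k. A $$ (i,j) * B $$ (j,i))"
    using assms by (simp add: mat_trace_def scalar_prod_def lessThan_atLeast0)
  also have "\<dots> = (\<Sum>j<k. \<Sum>i<n. B $$ (j,i) * A $$ (i,j))"
    by (subst sum.swap) (simp add: mult.commute)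
  also have "\<dots> = mat_trace (B * A)"
    using assms by (simp add: mat_trace_def scalar_prod_def lessThan_atLeast0)
  finally show ?thesis .
qed

lemma upper_triangular_mult_index:
  assumes A: "A \<in> carrier_mat n n" and B: "B \<in> carrier_mat n n"
    and "upper_triangular A" "upper_triangular (B::'a::comm_semiring_1 Matrix.mat)"
    and ji: "j \<le> i" and i: "i < n"
  shows "(A * B) $$ (i,j) = A $$ (i,i) * B $$ (i,j)"
proof -
  have vanish: "A $$ (i,k) * B $$ (k,j) = 0" if k: "k < n" "k \<noteq> i" for k
  proof (cases "k < i")
    case True
    thus ?thesis using assms upper_triangularD[of A k i] by simp
  next
    case False
    thus ?thesis using assms k upper_triangularD[of B j k] by simp
  qed
  have "(A * B) $$ (i,j) = (\<Sum>k\<in>{0..<n}. A $$ (i,k) * B $$ (k,j))"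
    using A B ji i by (simp add: scalar_prod_def)
  also have "\<dots> = A $$ (i,i) * B $$ (i,j) + (\<Sum>k\<in>{0..<n} - {i}. A $$ (i,k) * B $$ (k,j))"
    by (rule sum.remove) (use i in auto)
  also have "(\<Sum>k\<in>{0..<n} - {i}. A $$ (i,k) * B $$ (k,j)) = 0"
    by (rule sum.neutral) (use vanish in auto)
  finally show ?thesis by simp
qed

lemma upper_triangular_pow:
  assumes B: "B \<in> carrier_mat n n" and ut: "upper_triangular (B::'a::comm_semiring_1 Matrix.mat)"
  shows "upper_triangular (B ^\<^sub>m m) \<and> (\<forall>i<n. (B ^\<^sub>m m) $$ (i,i) = B $$ (i,i) ^ m)"
proof (induction m)
  case (Suc m)
  have Bm: "B ^\<^sub>m m \<in> carrier_mat n n" using B by simp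
  note index = upper_triangular_mult_index[OF Bm B conjunct1[OF Suc] ut]
  have "upper_triangular (B ^\<^sub>m m * B)"
  proof
    fix i j assume "j < i" "i < dim_row (B ^\<^sub>m m * B)"
    thus "(B ^\<^sub>m m * B) $$ (i,j) = 0"
      using index[of j i] B ut upper_triangularD[of B j i] by simp
  qed
  moreover have "(B ^\<^sub>m m * B) $$ (i,i) = B $$ (i,i) ^ Suc m" if "i < n" for i
    using index[of i i] Suc that by (simp add: mult.commute)
  ultimately show ?case by simp
qed (use B in auto)

lemma poly_prod_list_linear:
  fixes x :: "'a::comm_ring_1"
  shows "poly (\<Prod>e\<leftarrow>es. [:- e, 1:]) x = (\<Prod>e\<leftarrow>es. (x - e))"
  by (induction es) (simp_all add: algebra_simps)

lemma mat_trace_pow_eq_sum_roots: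
  assumes A: "(A::'a::conjugatable_ordered_field Matrix.mat) \<in> carrier_mat n n"
    and char_poly: "char_poly A = (\<Prod>e\<leftarrow>es. [:- e, 1:])"
  shows "mat_trace (A ^\<^sub>m m) = (\<Sum>e\<leftarrow>es. e ^ m)"
proof -
  obtain B P Q where "schur_decomposition A es = (B,P,Q)"
    by (cases "schur_decomposition A es") auto
  hence wit: "similar_mat_wit A B P Q" and ut: "upper_triangular B" and dg: "diag_mat B = es"
    using schur_decomposition[OF A char_poly] by auto
  from wit A have B: "B \<in> carrier_mat n n" and P: "P \<in> carrier_mat n n"
    and Q: "Q \<in> carrier_mat n n" and QP: "Q * P = 1\<^sub>m n"
    unfolding similar_mat_wit_def Let_def by auto
  have Bm: "B ^\<^sub>m m \<in> carrier_mat n n" using B by simp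
  have "mat_trace (A ^\<^sub>m m) = mat_trace (P * B ^\<^sub>m m * Q)"
    by (simp add: similar_mat_wit_pow_id[OF wit])
  also have "\<dots> = mat_trace (Q * (P * B ^\<^sub>m m))"
    by (rule mat_trace_mult_comm[of _ n n]) (use P Bm Q in auto)
  also have "Q * (P * B ^\<^sub>m m) = B ^\<^sub>m m"
    using P Bm Q QP by (simp add: assoc_mult_mat[symmetric] left_mult_one_mat)
  also have "mat_trace (B ^\<^sub>m m) = (\<Sum>i<n. B $$ (i,i) ^ m)"
    using upper_triangular_pow[OF B ut, of m] B by (simp add: mat_trace_def)
  also have "\<dots> = (\<Sum>e\<leftarrow>es. e ^ m)"
    unfolding dg[symmetric] diag_mat_def using B
    by (simp add: interv_sum_list_conv_sum_set_nat lessThan_atLeast0 comp_def)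
  finally show ?thesis .
qed

lemma char_poly_to_jnf:
  fixes A :: "real^'n::finite^'n"
  assumes e: "bij_betw e {0..<CARD('n)} UNIV"
    and char_poly: "\<And>x. det (mat x - A) = (\<Prod>e\<leftarrow>es. (x - e))"
  shows "char_poly (to_jnf e A) = (\<Prod>e\<leftarrow>es. [:- e, 1:])"
proof (rule poly_eq_poly_eq_iff[THEN iffD1], rule ext)
  fix x
  have e_eq: "e i = e j \<longleftrightarrow> i = j" if "i < CARD('n)" "j < CARD('n)" for i j
    using that e unfolding bij_betw_def inj_on_def by auto
  have "- char_matrix (to_jnf e A) x = to_jnf e (mat x - A)"
    by (rule eq_matI) (auto simp: char_matrix_def Finite_Cartesian_Product.mat_def e_eq)
  hence "poly (char_poly (to_jnf e A)) x = det (mat x - A)"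
    using char_poly_matrix[OF to_jnf_carrier[of e A]] det_to_jnf[OF e] by simp
  thus "poly (char_poly (to_jnf e A)) x = poly (\<Prod>e\<leftarrow>es. [:- e, 1:]) x"
    by (simp add: char_poly poly_prod_list_linear)
qed

lemma trace_matpow_eq_sum_pow_roots:
  fixes A :: "real^'n::finite^'n" and es :: "real list"
  assumes "\<And>x. det (mat x - A) = (\<Prod>e\<leftarrow>es. (x - e))"
  shows "trace (matpow A m) = (\<Sum>e\<leftarrow>es. e ^ m)"
proof -
  obtain e :: "nat \<Rightarrow> 'n" where e: "bij_betw e {0..<CARD('n)} UNIV"
    using ex_bij_betw_nat_finite[of "UNIV::'n set"] by auto
  have "trace (matpow A m) = mat_trace (to_jnf e A ^\<^sub>m m)"
    unfolding trace_def mat_trace_def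
    using sum_enum_reindex[OF e, of "\<lambda>a. matpow A m $ a $ a"]
    by (simp add: to_jnf_matpow[OF e, symmetric])
  also have "\<dots> = (\<Sum>e\<leftarrow>es. e ^ m)"
    by (rule mat_trace_pow_eq_sum_roots[OF to_jnf_carrier char_poly_to_jnf[OF e assms]])
  finally show ?thesis .
qed

lemma trace_matpow_eq_one_plus_sum:
  fixes A :: "real^'n::finite^'n" and L :: "'i::linorder set"
  assumes "\<And>x. det (mat x - A) = (x - 1) * (\<Prod>l\<in>L. (x - \<gamma> l))" and "finite L"
  shows "trace (matpow A m) = 1 + (\<Sum>l\<in>L. \<gamma> l ^ m)"
proof -
  define es where "es = 1 # map \<gamma> (sorted_list_of_set L)"
  have "det (mat x - A) = (\<Prod>e\<leftarrow>es. (x - e))" for x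
    using assms by (simp add: es_def comp_def prod.distinct_set_conv_list[symmetric])
  hence "trace (matpow A m) = (\<Sum>e\<leftarrow>es. e ^ m)"
    by (rule trace_matpow_eq_sum_pow_roots)
  thus ?thesis
    using assms by (simp add: es_def comp_def sum.distinct_set_conv_list[symmetric])
qed

section \<open>The estimator as a weighted sum of the observations\<close>

lemma theta_hat_Suc_scaled:
  assumes "t \<ge> 1"
  shows "real (Suc t) *\<^sub>R theta_hat A X (Suc t) \<omega> = real t *\<^sub>R (A *v theta_hat A X t \<omega>) + Xvec X (Suc t) \<omega>"
  using assms by (cases t) (simp_all add: scaleR_add_right del: of_nat_Suc)

lemma scaled_theta_hat_error:
  fixes A :: "real^'n^'n"
  assumes A1: "A *v ones = ones" and "t \<ge> 1"
  shows "real t *\<^sub>R (theta_hat A X t \<omega> - \<theta> *\<^sub>R ones)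
    = (\<Sum>k\<in>{1..t}. matpow A (t - k) *v (Xvec X k \<omega> - \<theta> *\<^sub>R ones))"
  using \<open>t \<ge> 1\<close>
proof (induction t rule: nat_induct_at_least)
  case (Suc t)
  define v where "v k = Xvec X k \<omega> - \<theta> *\<^sub>R ones" for k
  have "(\<Sum>k\<in>{1..Suc t}. matpow A (Suc t - k) *v v k)
      = (\<Sum>k\<in>{1..t}. A *v (matpow A (t - k) *v v k)) + v (Suc t)"
    by (simp add: Suc_diff_le matpow_Suc matrix_vector_mul_assoc)
  also have "\<dots> = A *v (real t *\<^sub>R (theta_hat A X t \<omega> - \<theta> *\<^sub>R ones)) + v (Suc t)"
    by (simp add: Suc.IH[folded v_def] linear_sum[OF matrix_vector_mul_linear] comp_def)
  also have "\<dots> = real t *\<^sub>R (A *v theta_hat A X t \<omega>) + Xvec X (Suc t) \<omega> - real (Suc t) *\<^sub>R (\<theta> *\<^sub>R ones)"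
    using A1 by (simp add: v_def algebra_simps)
  also have "\<dots> = real (Suc t) *\<^sub>R (theta_hat A X (Suc t) \<omega> - \<theta> *\<^sub>R ones)"
    by (simp only: scaleR_diff_right theta_hat_Suc_scaled[OF Suc.hyps])
  finally show ?case by (simp add: v_def)
qed simp

lemma theta_hat_error_component:
  fixes A :: "real^'n^'n"
  assumes "A *v ones = ones" and "t \<ge> 1"
  shows "(theta_hat A X t \<omega> - \<theta> *\<^sub>R ones) $ i =
    (\<Sum>p\<in>{1..t} \<times> UNIV. matpow A (t - fst p) $ i $ snd p / real t * (X (fst p) (snd p) \<omega> - \<theta>))"
proof -
  have "(theta_hat A X t \<omega> - \<theta> *\<^sub>R ones) $ i = real t * (theta_hat A X t \<omega> - \<theta> *\<^sub>R ones) $ i / real t"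
    using assms by simp
  also have "real t * (theta_hat A X t \<omega> - \<theta> *\<^sub>R ones) $ i
      = (\<Sum>k\<in>{1..t}. \<Sum>j\<in>UNIV. matpow A (t - k) $ i $ j * (X k j \<omega> - \<theta>))"
    using arg_cong[OF scaled_theta_hat_error[OF assms], of "\<lambda>v. v $ i"]
    by (simp add: matrix_vector_mult_def Xvec_def ones_def)
  finally show ?thesis
    by (simp add: sum_divide_distrib sum.cartesian_product split_def)
qed

lemma grand_mean_minus_mean:
  assumes "t \<ge> 1"
  shows "grand_mean X t \<omega> - \<theta> =
    (\<Sum>p\<in>{1..t} \<times> (UNIV::'n::finite set). (X (fst p) (snd p) \<omega> - \<theta>) / (real CARD('n) * real t))"
proof -
  have "(\<Sum>p\<in>{1..t} \<times> (UNIV::'n set). X (fst p) (snd p) \<omega>) = (\<Sum>i\<in>UNIV. \<Sum>k\<in>{1..t}. X k i \<omega>)"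
    by (subst sum.swap) (simp add: sum.cartesian_product split_def)
  thus ?thesis
    using assms by (simp add: grand_mean_def sum_subtractf diff_divide_distrib
        sum_divide_distrib[symmetric] card_cartesian_product)
qed

section \<open>Mean squares of linear combinations of orthogonal variables\<close>

definition orthogonal_family :: "'a measure \<Rightarrow> ('i \<Rightarrow> 'a \<Rightarrow> real) \<Rightarrow> 'i set \<Rightarrow> real \<Rightarrow> bool" where
  "orthogonal_family M Z J v \<longleftrightarrow> (\<forall>p\<in>J. \<forall>q\<in>J. integrable M (\<lambda>\<omega>. Z p \<omega> * Z q \<omega>)
     \<and> (\<integral>\<omega>. Z p \<omega> * Z q \<omega> \<partial>M) = (if p = q then v else 0))"

lemma orthogonal_family_subset:
  "orthogonal_family M Z J v \<Longrightarrow> K \<subseteq> J \<Longrightarrow> orthogonal_family M Z K v"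
  unfolding orthogonal_family_def by (meson subsetD)

lemma orthogonal_familyD:
  assumes "orthogonal_family M Z J v" and "p \<in> J" and "q \<in> J"
  shows "integrable M (\<lambda>\<omega>. Z p \<omega> * Z q \<omega>)"
    and "(\<integral>\<omega>. Z p \<omega> * Z q \<omega> \<partial>M) = (if p = q then v else 0)"
  using assms unfolding orthogonal_family_def by blast+

lemma integral_square_sum_orthogonal:
  assumes Z: "orthogonal_family M Z J v" and "finite J"
  shows "integrable M (\<lambda>\<omega>. (\<Sum>p\<in>J. c p * Z p \<omega>)\<^sup>2)"
    and "(\<integral>\<omega>. (\<Sum>p\<in>J. c p * Z p \<omega>)\<^sup>2 \<partial>M) = v * (\<Sum>p\<in>J. (c p)\<^sup>2)"
proof -
  have expand: "(\<lambda>\<omega>. (\<Sum>p\<in>J. c p * Z p \<omega>)\<^sup>2) = (\<lambda>\<omega>. \<Sum>p\<in>J. \<Sum>q\<in>J. (c p * c q) * (Z p \<omega> * Z q \<omega>))"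
    by (auto simp: power2_eq_square sum_product mult_ac)
  note int = integrable_mult_right[OF orthogonal_familyD(1)[OF Z]]
  show "integrable M (\<lambda>\<omega>. (\<Sum>p\<in>J. c p * Z p \<omega>)\<^sup>2)"
    unfolding expand by (auto intro!: int)
  have "(\<integral>\<omega>. (\<Sum>p\<in>J. c p * Z p \<omega>)\<^sup>2 \<partial>M)
      = (\<Sum>p\<in>J. \<integral>\<omega>. (\<Sum>q\<in>J. (c p * c q) * (Z p \<omega> * Z q \<omega>)) \<partial>M)"
    unfolding expand by (rule Bochner_Integration.integral_sum) (auto intro!: int)
  also have "\<dots> = (\<Sum>p\<in>J. \<Sum>q\<in>J. (c p * c q) * (\<integral>\<omega>. Z p \<omega> * Z q \<omega> \<partial>M))"
  proof (rule sum.cong[OF refl])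
    fix p assume "p \<in> J"
    have "(\<integral>\<omega>. (\<Sum>q\<in>J. (c p * c q) * (Z p \<omega> * Z q \<omega>)) \<partial>M)
        = (\<Sum>q\<in>J. \<integral>\<omega>. (c p * c q) * (Z p \<omega> * Z q \<omega>) \<partial>M)"
      by (rule Bochner_Integration.integral_sum) (rule int[OF \<open>p \<in> J\<close>])
    thus "(\<integral>\<omega>. (\<Sum>q\<in>J. (c p * c q) * (Z p \<omega> * Z q \<omega>)) \<partial>M)
        = (\<Sum>q\<in>J. (c p * c q) * (\<integral>\<omega>. Z p \<omega> * Z q \<omega> \<partial>M))"
      by simp
  qed
  also have "\<dots> = (\<Sum>p\<in>J. \<Sum>q\<in>J. if q = p then c p * c q * v else 0)"
    by (intro sum.cong refl) (simp add: orthogonal_familyD(2)[OF Z] eq_commute)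
  also have "\<dots> = (\<Sum>p\<in>J. (c p)\<^sup>2 * v)"
    using \<open>finite J\<close> by (simp add: power2_eq_square)
  finally show "(\<integral>\<omega>. (\<Sum>p\<in>J. c p * Z p \<omega>)\<^sup>2 \<partial>M) = v * (\<Sum>p\<in>J. (c p)\<^sup>2)"
    by (simp add: sum_distrib_left mult.commute)
qed

lemma same_distr_integrable_iff:
  fixes X Y :: "'a \<Rightarrow> real" and g :: "real \<Rightarrow> real"
  assumes "X \<in> borel_measurable M" "Y \<in> borel_measurable M" "distr M borel X = distr M borel Y"
    and "g \<in> borel_measurable borel"
  shows "integrable M (\<lambda>\<omega>. g (X \<omega>)) \<longleftrightarrow> integrable M (\<lambda>\<omega>. g (Y \<omega>))"
  using integrable_distr_eq[OF assms(1,4)] integrable_distr_eq[OF assms(2,4)] assms(3) by simp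

lemma same_distr_integral_eq:
  fixes X Y :: "'a \<Rightarrow> real" and g :: "real \<Rightarrow> real"
  assumes "X \<in> borel_measurable M" "Y \<in> borel_measurable M" "distr M borel X = distr M borel Y"
    and "g \<in> borel_measurable borel"
  shows "(\<integral>\<omega>. g (X \<omega>) \<partial>M) = (\<integral>\<omega>. g (Y \<omega>) \<partial>M)"
  using integral_distr[OF assms(1,4)] integral_distr[OF assms(2,4)] assms(3) by simp

lemma (in prob_space) iid_centred_orthogonal_family:
  fixes X0 :: "'a \<Rightarrow> real" and Y :: "'i \<Rightarrow> 'a \<Rightarrow> real"
  assumes X0: "X0 \<in> borel_measurable M" "integrable M (\<lambda>x. (X0 x)\<^sup>2)"
    and Y: "\<And>p. p \<in> I \<Longrightarrow> Y p \<in> borel_measurable M"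
      "\<And>p. p \<in> I \<Longrightarrow> distr M borel (Y p) = distr M borel X0"
    and indep: "indep_vars (\<lambda>_. borel) Y I"
  shows "orthogonal_family M (\<lambda>p \<omega>. Y p \<omega> - expectation X0) I (variance X0)"
proof -
  let ?\<mu> = "expectation X0"
  define Z where "Z p = (\<lambda>\<omega>. Y p \<omega> - ?\<mu>)" for p
  have "integrable M X0" using X0 by (rule square_integrable_imp_integrable)
  hence X0_centred: "integrable M (\<lambda>x. X0 x - ?\<mu>)" by simp
  have "(\<lambda>x. (X0 x - ?\<mu>) * (X0 x - ?\<mu>)) = (\<lambda>x. (X0 x)\<^sup>2 - 2 * ?\<mu> * X0 x + ?\<mu>\<^sup>2)"
    by (auto simp: power2_eq_square algebra_simps)
  hence X0_square: "integrable M (\<lambda>x. (X0 x - ?\<mu>) * (X0 x - ?\<mu>))"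
    using X0(2) \<open>integrable M X0\<close> by simp
  have centre: "(\<lambda>x::real. x - ?\<mu>) \<in> borel_measurable borel"
    and centre_square: "(\<lambda>x::real. (x - ?\<mu>) * (x - ?\<mu>)) \<in> borel_measurable borel"
    by simp_all
  note same_integrable = same_distr_integrable_iff[OF Y(1) X0(1) Y(2)]
    and same_integral = same_distr_integral_eq[OF Y(1) X0(1) Y(2)]
  have int: "integrable M (Z p)" if "p \<in> I" for p
    using same_integrable[OF that that centre] X0_centred by (simp add: Z_def)
  have mean: "expectation (Z p) = 0" if "p \<in> I" for p
  proof -
    have "expectation (Z p) = expectation (\<lambda>x. X0 x - ?\<mu>)"
      using same_integral[OF that that centre] by (simp add: Z_def)
    also have "\<dots> = 0"
      using \<open>integrable M X0\<close> by (simp add: prob_space)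
    finally show ?thesis .
  qed
  have "integrable M (\<lambda>\<omega>. Z p \<omega> * Z q \<omega>) \<and> expectation (\<lambda>\<omega>. Z p \<omega> * Z q \<omega>) = (if p = q then variance X0 else 0)"
    if pq: "p \<in> I" "q \<in> I" for p q
  proof (cases "p = q")
    case True
    have "integrable M (\<lambda>\<omega>. Z p \<omega> * Z p \<omega>)"
      using same_integrable[OF pq(1) pq(1) centre_square] X0_square by (simp add: Z_def)
    moreover have "expectation (\<lambda>\<omega>. Z p \<omega> * Z p \<omega>) = variance X0"
      using same_integral[OF pq(1) pq(1) centre_square] by (simp add: Z_def power2_eq_square)
    ultimately show ?thesis using True by simp
  next
    case False
    have restrict: "indep_var (PiM {p} (\<lambda>_. borel)) (\<lambda>\<omega>. restrict (\<lambda>i. Y i \<omega>) {p})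
        (PiM {q} (\<lambda>_. borel)) (\<lambda>\<omega>. restrict (\<lambda>i. Y i \<omega>) {q})"
      using indep_var_restrict[OF indep, of "{p}" "{q}"] pq False by auto
    have component: "(\<lambda>f. f r - ?\<mu>) \<in> borel_measurable (PiM {r} (\<lambda>_. borel :: real measure))" for r :: 'i
      by (intro borel_measurable_diff measurable_component_singleton) auto
    have "indep_var borel (Z p) borel (Z q)"
      using indep_var_compose[OF restrict component component] by (simp add: comp_def Z_def)
    from indep_var_integrable[OF this int[OF pq(1)] int[OF pq(2)]]
      indep_var_lebesgue_integral[OF this int[OF pq(1)] int[OF pq(2)]]
    show ?thesis using mean[OF pq(1)] False by simp
  qed
  thus ?thesis by (simp add: orthogonal_family_def Z_def)
qed

section \<open>The performance ratio\<close>

lemma norm_vec_square: "(norm (x::real^'n))\<^sup>2 = (\<Sum>i\<in>UNIV. (x $ i)\<^sup>2)"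
  unfolding power2_norm_eq_inner by (simp add: inner_vec_def power2_eq_square)

lemma mean_square_theta_hat_error:
  fixes X :: "nat \<Rightarrow> 'n::finite \<Rightarrow> 'a \<Rightarrow> real" and A :: "real^'n^'n"
  assumes Z: "orthogonal_family M (\<lambda>p \<omega>. X (fst p) (snd p) \<omega> - \<theta>) ({1..t} \<times> UNIV) v"
    and A1: "A *v ones = ones" and sym: "transpose A = A" and t: "t \<ge> 1"
  shows "(\<integral>\<omega>. (norm (theta_hat A X t \<omega> - \<theta> *\<^sub>R ones))\<^sup>2 \<partial>M)
    = v * (\<Sum>s<t. trace (matpow A (2 * s))) / (real t)\<^sup>2"
proof -
  let ?J = "{1..t} \<times> (UNIV::'n set)"
  define c where "c i p = matpow A (t - fst p) $ i $ snd p / real t" for i p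
  have "finite ?J" by simp
  note sq = integral_square_sum_orthogonal[OF Z this]
  have "(\<integral>\<omega>. (norm (theta_hat A X t \<omega> - \<theta> *\<^sub>R ones))\<^sup>2 \<partial>M)
      = (\<integral>\<omega>. (\<Sum>i\<in>UNIV. (\<Sum>p\<in>?J. c i p * (X (fst p) (snd p) \<omega> - \<theta>))\<^sup>2) \<partial>M)"
    by (simp only: norm_vec_square theta_hat_error_component[OF A1 t] c_def)
  also have "\<dots> = v * (\<Sum>i\<in>UNIV. \<Sum>p\<in>?J. (c i p)\<^sup>2)"
    using sq by (simp add: Bochner_Integration.integral_sum sum_distrib_left)
  also have "(\<Sum>i\<in>UNIV. \<Sum>p\<in>?J. (c i p)\<^sup>2)
      = (\<Sum>k\<in>{1..t}. \<Sum>i\<in>UNIV. \<Sum>j\<in>UNIV. (matpow A (t - k) $ i $ j)\<^sup>2) / (real t)\<^sup>2"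
    by (subst sum.swap) (simp add: c_def sum.cartesian_product split_def power_divide sum_divide_distrib)
  also have "(\<Sum>k\<in>{1..t}. \<Sum>i\<in>UNIV. \<Sum>j\<in>UNIV. (matpow A (t - k) $ i $ j)\<^sup>2)
      = (\<Sum>k\<in>{1..t}. trace (matpow A (2 * (t - k))))"
    by (simp add: sum_square_matpow_eq_trace[OF sym])
  also have "\<dots> = (\<Sum>s<t. trace (matpow A (2 * s)))"
    by (rule sum.reindex_bij_witness[of _ "\<lambda>s. t - s" "\<lambda>k. t - k"]) auto
  finally show ?thesis by simp
qed

lemma mean_square_grand_mean_error:
  fixes X :: "nat \<Rightarrow> 'n::finite \<Rightarrow> 'a \<Rightarrow> real"
  assumes Z: "orthogonal_family M (\<lambda>p \<omega>. X (fst p) (snd p) \<omega> - \<theta>) ({1..t} \<times> UNIV) v"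
    and t: "t \<ge> 1"
  shows "(\<integral>\<omega>. (norm ((grand_mean X t \<omega> - \<theta>) *\<^sub>R (ones::real^'n)))\<^sup>2 \<partial>M) = v / real t"
proof -
  let ?J = "{1..t} \<times> (UNIV::'n set)" and ?N = "real CARD('n)"
  have "(norm (ones::real^'n))\<^sup>2 = ?N"
    by (simp add: norm_vec_square ones_def)
  hence "(\<integral>\<omega>. (norm ((grand_mean X t \<omega> - \<theta>) *\<^sub>R (ones::real^'n)))\<^sup>2 \<partial>M)
      = ?N * (\<integral>\<omega>. (\<Sum>p\<in>?J. 1 / (?N * real t) * (X (fst p) (snd p) \<omega> - \<theta>))\<^sup>2 \<partial>M)"
    by (simp add: grand_mean_minus_mean[OF t] power_mult_distrib mult.commute)
  also have "\<dots> = ?N * (v * (\<Sum>p\<in>?J. (1 / (?N * real t))\<^sup>2))"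
    using integral_square_sum_orthogonal(2)[OF Z, of "\<lambda>_. 1 / (?N * real t)"] by simp
  also have "\<dots> = v / real t"
    using t by (simp add: card_cartesian_product power2_eq_square field_simps)
  finally show ?thesis .
qed

lemma perf_ratio_eq_trace_sum:
  fixes X :: "nat \<Rightarrow> 'n::finite \<Rightarrow> 'a \<Rightarrow> real" and A :: "real^'n^'n"
  assumes "orthogonal_family M (\<lambda>p \<omega>. X (fst p) (snd p) \<omega> - \<theta>) ({1..t} \<times> UNIV) v"
    and "v \<noteq> 0" and "A *v ones = ones" and "transpose A = A" and "t \<ge> 1"
  shows "perf_ratio M A X \<theta> t = real t / (\<Sum>s<t. trace (matpow A (2 * s)))"
proof -
  have "perf_ratio M A X \<theta> t = (v / real t) / (v * (\<Sum>s<t. trace (matpow A (2 * s))) / (real t)\<^sup>2)"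
    unfolding perf_ratio_def
    by (simp only: mean_square_theta_hat_error[OF assms(1,3-5)] mean_square_grand_mean_error[OF assms(1,5)])
  also have "\<dots> = real t / (\<Sum>s<t. trace (matpow A (2 * s)))"
    using assms(2) by (simp add: field_simps power2_eq_square)
  finally show ?thesis .
qed

section \<open>Bounds and asymptotics\<close>

definition spectral_ratio :: "(nat \<Rightarrow> real) \<Rightarrow> nat set \<Rightarrow> nat \<Rightarrow> real" where
  "spectral_ratio g L t = 1 / (1 + (1 / real t) * (\<Sum>l\<in>L. (1 - g l ^ (2 * t)) / (1 - (g l)\<^sup>2)))"

lemma sum_lessThan_one_plus_even_powers:
  assumes "\<And>l. l \<in> L \<Longrightarrow> (g l)\<^sup>2 \<noteq> (1::real)"
  shows "(\<Sum>s<t. 1 + (\<Sum>l\<in>L. g l ^ (2 * s))) = real t + (\<Sum>l\<in>L. (1 - g l ^ (2 * t)) / (1 - (g l)\<^sup>2))"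
proof -
  have "(\<Sum>s<t. \<Sum>l\<in>L. g l ^ (2 * s)) = (\<Sum>l\<in>L. \<Sum>s<t. ((g l)\<^sup>2) ^ s)"
    by (subst sum.swap) (simp add: power_mult)
  also have "\<dots> = (\<Sum>l\<in>L. (1 - g l ^ (2 * t)) / (1 - (g l)\<^sup>2))"
    using assms by (intro sum.cong refl) (simp add: sum_gp_strict power_mult)
  finally show ?thesis by (simp add: sum.distrib)
qed

lemma stochastic_matrix_ones: "stochastic_matrix A \<Longrightarrow> A *v ones = ones"
  by (simp add: stochastic_matrix_def matrix_vector_mult_def ones_def Finite_Cartesian_Product.vec_eq_iff)

lemma perf_ratio_eq_spectral_ratio:
  fixes X :: "nat \<Rightarrow> 'n::finite \<Rightarrow> 'a \<Rightarrow> real" and A :: "real^'n^'n" and L :: "nat set"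
  assumes "orthogonal_family M (\<lambda>p \<omega>. X (fst p) (snd p) \<omega> - \<theta>) ({1..t} \<times> UNIV) v" and "v \<noteq> 0"
    and "stochastic_matrix A" and "transpose A = A"
    and "\<And>x. det (mat x - A) = (x - 1) * (\<Prod>l\<in>L. (x - \<gamma> l))" and "finite L"
    and "\<And>l. l \<in> L \<Longrightarrow> \<bar>\<gamma> l\<bar> < 1" and "t \<ge> 1"
  shows "perf_ratio M A X \<theta> t = spectral_ratio \<gamma> L t"
proof -
  have "(\<Sum>s<t. trace (matpow A (2 * s))) = (\<Sum>s<t. 1 + (\<Sum>l\<in>L. \<gamma> l ^ (2 * s)))"
    by (simp add: trace_matpow_eq_one_plus_sum[OF assms(5,6)])
  also have "\<dots> = real t + (\<Sum>l\<in>L. (1 - \<gamma> l ^ (2 * t)) / (1 - (\<gamma> l)\<^sup>2))"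
    by (rule sum_lessThan_one_plus_even_powers) (use assms(7) abs_square_less_1 in force)
  finally show ?thesis
    using perf_ratio_eq_trace_sum[OF assms(1,2) stochastic_matrix_ones[OF assms(3)] assms(4,8)] assms(8)
    by (simp add: spectral_ratio_def field_simps)
qed

lemma inverse_one_plus_bounds:
  fixes D s c :: real
  assumes "0 \<le> D" "D \<le> s" "(1 - c) * s \<le> D"
  shows "1 - s \<le> 1 / (1 + D)" and "1 / (1 + D) \<le> 1 - s + c * s + s\<^sup>2"
proof -
  have "1 - D \<le> 1 / (1 + D)" using assms(1) by (simp add: field_simps)
  thus "1 - s \<le> 1 / (1 + D)" using assms(2) by simp
  have "1 \<le> (1 - D + D\<^sup>2) * (1 + D)"
    using assms(1) by (simp add: algebra_simps power2_eq_square)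
  hence "1 / (1 + D) \<le> 1 - D + D\<^sup>2" using assms(1) by (simp add: field_simps)
  moreover have "D\<^sup>2 \<le> s\<^sup>2" using assms(1,2) by (intro power_mono) auto
  ultimately show "1 / (1 + D) \<le> 1 - s + c * s + s\<^sup>2" using assms(3) by (simp add: algebra_simps)
qed

lemma damped_sum_bounds:
  fixes g :: "nat \<Rightarrow> real"
  assumes "finite L" and g: "\<And>l. l \<in> L \<Longrightarrow> \<bar>g l\<bar> < 1"
  shows "0 \<le> (\<Sum>l\<in>L. (1 - g l ^ (2 * t)) / (1 - (g l)\<^sup>2))"
    and "(\<Sum>l\<in>L. (1 - g l ^ (2 * t)) / (1 - (g l)\<^sup>2)) \<le> (\<Sum>l\<in>L. 1 / (1 - (g l)\<^sup>2))"
    and "(1 - Max ((\<lambda>l. \<bar>g l\<bar>) ` L) ^ (2 * t)) * (\<Sum>l\<in>L. 1 / (1 - (g l)\<^sup>2))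
      \<le> (\<Sum>l\<in>L. (1 - g l ^ (2 * t)) / (1 - (g l)\<^sup>2))"
proof -
  have den: "0 < 1 - (g l)\<^sup>2" if "l \<in> L" for l
    using g[OF that] abs_square_less_1 by force
  have even: "g l ^ (2 * t) = \<bar>g l\<bar> ^ (2 * t)" for l
    by (simp add: power_even_abs)
  have le1: "g l ^ (2 * t) \<le> 1" if "l \<in> L" for l
    using g[OF that] by (simp add: even power_le_one)
  show "0 \<le> (\<Sum>l\<in>L. (1 - g l ^ (2 * t)) / (1 - (g l)\<^sup>2))"
    using den le1 by (intro sum_nonneg divide_nonneg_pos) auto
  show "(\<Sum>l\<in>L. (1 - g l ^ (2 * t)) / (1 - (g l)\<^sup>2)) \<le> (\<Sum>l\<in>L. 1 / (1 - (g l)\<^sup>2))"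
    using den by (intro sum_mono divide_right_mono) (simp_all add: even less_imp_le)
  show "(1 - Max ((\<lambda>l. \<bar>g l\<bar>) ` L) ^ (2 * t)) * (\<Sum>l\<in>L. 1 / (1 - (g l)\<^sup>2))
      \<le> (\<Sum>l\<in>L. (1 - g l ^ (2 * t)) / (1 - (g l)\<^sup>2))"
    unfolding sum_distrib_left
  proof (rule sum_mono)
    fix l assume l: "l \<in> L"
    have "\<bar>g l\<bar> ^ (2 * t) \<le> Max ((\<lambda>l. \<bar>g l\<bar>) ` L) ^ (2 * t)"
      using \<open>finite L\<close> l by (intro power_mono Max_ge) auto
    hence "1 - Max ((\<lambda>l. \<bar>g l\<bar>) ` L) ^ (2 * t) \<le> 1 - g l ^ (2 * t)"
      by (simp add: even)
    thus "(1 - Max ((\<lambda>l. \<bar>g l\<bar>) ` L) ^ (2 * t)) * (1 / (1 - (g l)\<^sup>2))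
        \<le> (1 - g l ^ (2 * t)) / (1 - (g l)\<^sup>2)"
      using den[OF l] by (simp add: divide_right_mono)
  qed
qed

lemma spectral_ratio_bounds:
  fixes g :: "nat \<Rightarrow> real" and L :: "nat set" and t :: nat
  assumes "finite L" and "\<And>l. l \<in> L \<Longrightarrow> \<bar>g l\<bar> < 1" and "t \<ge> 1"
  defines "S \<equiv> \<Sum>l\<in>L. 1 / (1 - (g l)\<^sup>2)" and "\<rho> \<equiv> Max ((\<lambda>l. \<bar>g l\<bar>) ` L)"
  shows "1 - S / real t \<le> spectral_ratio g L t"
    and "spectral_ratio g L t \<le> 1 - S / real t + \<rho> ^ (2 * t) * (S / real t) + (S / real t)\<^sup>2"
proof -
  let ?D = "(\<Sum>l\<in>L. (1 - g l ^ (2 * t)) / (1 - (g l)\<^sup>2)) / real t"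
  note damped = damped_sum_bounds[where L = L and g = g and t = t, OF assms(1,2), folded S_def \<rho>_def]
  have "0 \<le> ?D" "?D \<le> S / real t" "(1 - \<rho> ^ (2 * t)) * (S / real t) \<le> ?D"
    using damped \<open>t \<ge> 1\<close> by (simp_all add: divide_right_mono)
  note bounds = inverse_one_plus_bounds[OF this]
  show "1 - S / real t \<le> spectral_ratio g L t"
    and "spectral_ratio g L t \<le> 1 - S / real t + \<rho> ^ (2 * t) * (S / real t) + (S / real t)\<^sup>2"
    using bounds by (simp_all add: spectral_ratio_def)
qed

lemma spectral_ratio_asymptotics:
  fixes g :: "nat \<Rightarrow> real"
  assumes "finite L" and g: "\<And>l. l \<in> L \<Longrightarrow> \<bar>g l\<bar> < 1"
  shows "(\<lambda>t. real t * (1 - spectral_ratio g L t)) \<longlonglongrightarrow> (\<Sum>l\<in>L. 1 / (1 - (g l)\<^sup>2))"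
proof -
  define E where "E t = (\<Sum>l\<in>L. (1 - g l ^ (2 * t)) / (1 - (g l)\<^sup>2))" for t
  have E: "E \<longlonglongrightarrow> (\<Sum>l\<in>L. 1 / (1 - (g l)\<^sup>2))"
    unfolding E_def
  proof (rule tendsto_sum)
    fix l assume "l \<in> L"
    hence "\<bar>(g l)\<^sup>2\<bar> < 1" using g abs_square_less_1 by force
    hence "(\<lambda>t. g l ^ (2 * t)) \<longlonglongrightarrow> 0" and "1 - (g l)\<^sup>2 \<noteq> 0"
      by (simp_all add: power_mult LIMSEQ_power_zero)
    thus "(\<lambda>t. (1 - g l ^ (2 * t)) / (1 - (g l)\<^sup>2)) \<longlonglongrightarrow> 1 / (1 - (g l)\<^sup>2)"
      by (auto intro!: tendsto_eq_intros)
  qed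
  have "(\<lambda>t. E t / (1 + (1 / real t) * E t)) \<longlonglongrightarrow> (\<Sum>l\<in>L. 1 / (1 - (g l)\<^sup>2)) / (1 + 0 * (\<Sum>l\<in>L. 1 / (1 - (g l)\<^sup>2)))"
    by (intro tendsto_intros E lim_1_over_n) simp
  moreover have "E t / (1 + (1 / real t) * E t) = real t * (1 - spectral_ratio g L t)" for t
  proof (cases "t = 0")
    case False
    have "1 + (1 / real t) * E t > 0"
      using damped_sum_bounds(1)[OF assms] False by (simp add: E_def add_pos_nonneg)
    moreover have "spectral_ratio g L t = 1 / (1 + (1 / real t) * E t)"
      by (simp add: spectral_ratio_def E_def)
    ultimately show ?thesis using False by (simp add: field_simps)
  qed (simp add: E_def)
  ultimately show ?thesis by simp
qed

theorem theorem2: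
  fixes M :: "'a measure"
    and X0 :: "'a \<Rightarrow> real"
    and X :: "nat \<Rightarrow> 'n::finite \<Rightarrow> 'a \<Rightarrow> real"
    and A :: "real^'n^'n"
    and \<theta> \<sigma> :: real
    and \<gamma> :: "nat \<Rightarrow> real"
  assumes "prob_space M"
    and "X0 \<in> borel_measurable M"
    and "integrable M (\<lambda>x. (X0 x)\<^sup>2)"
    and "\<theta> = (\<integral>x. X0 x \<partial>M)"
    and "\<sigma>\<^sup>2 = (\<integral>x. (X0 x - \<theta>)\<^sup>2 \<partial>M)"
    and "\<sigma>\<^sup>2 > 0"
    and "CARD('n) \<ge> 2"
    and "\<And>t i. t \<ge> 1 \<Longrightarrow> X t i \<in> borel_measurable M"
    and "\<And>t i. t \<ge> 1 \<Longrightarrow> distr M borel (X t i) = distr M borel X0"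
    and "prob_space.indep_vars M (\<lambda>_. borel) (\<lambda>(t, i). X t i) ({1..} \<times> UNIV)"
    and "stochastic_matrix A"
    and "irreducible_matrix A"
    and "aperiodic_matrix A"
    and "transpose A = A"
    and "\<And>x. det (mat x - A) = (x - 1) * (\<Prod>l\<in>{2..CARD('n)}. (x - \<gamma> l))"
    and "\<And>l. 2 \<le> l \<Longrightarrow> l < CARD('n) \<Longrightarrow> \<gamma> (Suc l) \<le> \<gamma> l"
    and "\<And>l. 2 \<le> l \<Longrightarrow> l \<le> CARD('n) \<Longrightarrow> -1 < \<gamma> l \<and> \<gamma> l < 1"
  shows "(\<forall>t\<ge>1. perf_ratio M A X \<theta> t =
           1 / (1 + (1 / real t) * (\<Sum>l=2..CARD('n). (1 - \<gamma> l ^ (2 * t)) / (1 - (\<gamma> l)\<^sup>2))))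
    \<and> (\<forall>t\<ge>1.
           (let S = (\<Sum>l=2..CARD('n). 1 / (1 - (\<gamma> l)\<^sup>2));
                \<Gamma> = Max ((\<lambda>l. \<bar>\<gamma> l\<bar>) ` {2..CARD('n)})
            in 1 - S / real t \<le> perf_ratio M A X \<theta> t \<and>
               perf_ratio M A X \<theta> t \<le> 1 - S / real t + \<Gamma> ^ (2 * t) * (S / real t) + (S / real t)\<^sup>2))
    \<and> ((\<lambda>t. real t * (1 - perf_ratio M A X \<theta> t))
           \<longlonglongrightarrow> (\<Sum>l=2..CARD('n). 1 / (1 - (\<gamma> l)\<^sup>2)))"
proof -
  interpret prob_space M by fact
  let ?L = "{2..CARD('n)}"
  have gamma: "\<bar>\<gamma> l\<bar> < 1" if "l \<in> ?L" for l
    using assms(17)[of l] that by auto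
  have "finite ?L" by simp
  have "orthogonal_family M (\<lambda>p \<omega>. X (fst p) (snd p) \<omega> - \<theta>) ({1..} \<times> UNIV) (\<sigma>\<^sup>2)"
    using iid_centred_orthogonal_family[OF assms(2,3), of "{1..} \<times> UNIV" "\<lambda>(t, i). X t i"] assms(4,5,8-10)
    by (auto simp: split_beta)
  hence "orthogonal_family M (\<lambda>p \<omega>. X (fst p) (snd p) \<omega> - \<theta>) ({1..t} \<times> UNIV) (\<sigma>\<^sup>2)" for t
    by (rule orthogonal_family_subset) auto
  moreover have "\<sigma>\<^sup>2 \<noteq> 0" using assms(6) by simp
  ultimately have ratio: "perf_ratio M A X \<theta> t = spectral_ratio \<gamma> ?L t" if "t \<ge> 1" for t
    using perf_ratio_eq_spectral_ratio[OF _ _ assms(11,14,15) \<open>finite ?L\<close> gamma that] by blast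
  have "(\<lambda>t. real t * (1 - perf_ratio M A X \<theta> t)) = (\<lambda>t. real t * (1 - spectral_ratio \<gamma> ?L t))"
  proof
    fix t show "real t * (1 - perf_ratio M A X \<theta> t) = real t * (1 - spectral_ratio \<gamma> ?L t)"
      by (cases "t = 0") (simp_all add: ratio)
  qed
  moreover note bounds = spectral_ratio_bounds[where L = ?L and g = \<gamma>, OF \<open>finite ?L\<close> gamma]
    and limit = spectral_ratio_asymptotics[where L = ?L and g = \<gamma>, OF \<open>finite ?L\<close> gamma]
  ultimately show ?thesis
  proof (intro conjI allI impI)
    fix t :: nat assume "t \<ge> 1"
    thus "perf_ratio M A X \<theta> t =
        1 / (1 + (1 / real t) * (\<Sum>l\<in>?L. (1 - \<gamma> l ^ (2 * t)) / (1 - (\<gamma> l)\<^sup>2)))"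
      using ratio by (simp add: spectral_ratio_def)
  qed (simp_all add: ratio bounds limit Let_def)
qed

end
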